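(* Let $n\ge 2$ be an integer. Then $$\binom{n^3-\lfloor\frac{(n-1)^3+1}{2}\rfloor}{3n^2-3n+1}+\binom{n^3-\lfloor\frac{(n-1)^3+2}{2}\rfloor}{3n^2-3n+1}< n^{3n^2}.$$ *)

theory Defs
  imports Main
begin

end

theory Submission
  imports Defs Complex_Main
begin

text \<open>
  With \<open>k = 3n\<^sup>2 - 3n + 1\<close> we have \<open>n\<^sup>3 = (n - 1)\<^sup>3 + k\<close>, so both upper indices \<open>m\<close>
  satisfy \<open>2m \<le> n\<^sup>3 + k\<close>. The estimate \<open>m choose k \<le> (e m / k)\<^sup>k \<le> (3m / k)\<^sup>k\<close>
  together with \<open>3(n\<^sup>3 + k) \<le> 2nk\<close> (valid for \<open>n \<ge> 5\<close>) bounds each binomial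
  coefficient by \<open>n\<^sup>k\<close>, and \<open>2 n\<^sup>k < n^(3n\<^sup>2)\<close> since \<open>3n\<^sup>2 - k = 3n - 1\<close>.
  The cases \<open>n = 2, 3, 4\<close> follow from \<open>m choose k \<le> 2\<^sup>m\<close>.
\<close>

lemma power_div_fact_le_exp:
  fixes x :: real
  assumes "x \<ge> 0"
  shows "x ^ n / fact n \<le> exp x"
proof -
  have exp_sums: "(\<lambda>i. x ^ i /\<^sub>R fact i) sums exp x"
    by (rule exp_converges)
  have "(\<Sum>i\<in>{n}. x ^ i /\<^sub>R fact i) \<le> (\<Sum>i. x ^ i /\<^sub>R fact i)"
    by (rule sum_le_suminf) (use exp_sums assms in \<open>auto simp: sums_iff\<close>)
  then show ?thesis
    using exp_sums by (simp add: sums_iff divide_inverse mult.commute)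
qed

lemma binomial_le_exp_mult_div_power:
  assumes "k > 0"
  shows "real (m choose k) \<le> (exp 1 * real m / real k) ^ k"
proof -
  have "real (m choose k) * fact k \<le> real m ^ k"
    using binomial_fact_pow[of m k] by (metis of_nat_fact of_nat_le_iff of_nat_mult of_nat_power)
  then have "real (m choose k) \<le> real m ^ k / fact k"
    by (simp add: field_simps)
  also have "\<dots> = (real m / real k) ^ k * (real k ^ k / fact k)"
    using assms by (simp add: power_divide)
  also have "\<dots> \<le> (real m / real k) ^ k * exp (real k)"
    by (intro mult_left_mono power_div_fact_le_exp) auto
  also have "exp (real k) = exp 1 ^ k"
    by (metis exp_of_nat_mult mult.right_neutral)
  also have "(real m / real k) ^ k * exp 1 ^ k = (exp 1 * real m / real k) ^ k"
    by (simp add: power_mult_distrib power_divide)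
  finally show ?thesis .
qed

lemma binomial_le_power_if_three_mult_le:
  assumes "k > 0" and "3 * m \<le> c * k"
  shows "m choose k \<le> c ^ k"
proof -
  have "exp 1 * real m / real k \<le> 3 * real m / real k"
    using exp_le by (intro divide_right_mono mult_right_mono) auto
  also have "\<dots> \<le> real c"
    using assms by (simp add: field_simps flip: of_nat_mult of_nat_le_iff[of "3 * m"])
  finally have "real (m choose k) \<le> real c ^ k"
    using binomial_le_exp_mult_div_power[OF \<open>k > 0\<close>, of m]
    by (meson order_trans power_mono divide_nonneg_nonneg mult_nonneg_nonneg exp_ge_zero of_nat_0_le_iff)
  then show ?thesis
    by (metis of_nat_le_iff of_nat_power)
qed

lemma binomial_le_power_if_twice_le_cube_add:
  fixes n m :: nat
  defines "k \<equiv> 3 * n^2 - 3 * n + 1"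
  assumes "n \<ge> 5" and "2 * m \<le> n^3 + k"
  shows "m choose k \<le> n ^ k"
proof (rule binomial_le_power_if_three_mult_le)
  show "k > 0" by (simp add: k_def)
  obtain j where n: "n = j + 5"
    using \<open>n \<ge> 5\<close> by (metis add.commute le_add_diff_inverse)
  have "3 * (n^3 + k) \<le> 2 * n * k"
    unfolding k_def n by (simp add: power3_eq_cube power2_eq_square algebra_simps)
  then show "3 * m \<le> n * k"
    using \<open>2 * m \<le> n^3 + k\<close> by (simp add: mult.assoc)
qed

theorem proposition4:
  fixes n :: nat
  assumes "n \<ge> 2"
  shows "((n^3 - ((n - 1)^3 + 1) div 2) choose (3*n^2 - 3*n + 1))
       + ((n^3 - ((n - 1)^3 + 2) div 2) choose (3*n^2 - 3*n + 1)) < n ^ (3*n^2)"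
proof (cases "n \<le> 4")
  case True
  then have "n = 2 \<or> n = 3 \<or> n = 4"
    using assms by auto
  then have "2 ^ (n^3 - ((n - 1)^3 + 1) div 2) + 2 ^ (n^3 - ((n - 1)^3 + 2) div 2) < n ^ (3*n^2)"
    by (elim disjE) simp_all
  then show ?thesis
    by (meson add_mono binomial_le_pow2 le_less_trans)
next
  case False
  define k where "k = 3 * n^2 - 3 * n + 1"
  have "n \<ge> 5"
    using False by simp
  then obtain j where n: "n = j + 5"
    by (metis add.commute le_add_diff_inverse)
  have cube: "n^3 = (n - 1)^3 + k"
    unfolding k_def n by (simp add: power3_eq_cube power2_eq_square algebra_simps)
  have le_n_pow_k: "(n^3 - ((n - 1)^3 + i) div 2) choose k \<le> n ^ k" if "i \<ge> 1" for i
  proof -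
    have "2 * (n^3 - ((n - 1)^3 + i) div 2) \<le> n^3 + k"
      using cube that by linarith
    with \<open>n \<ge> 5\<close> show ?thesis
      unfolding k_def by (rule binomial_le_power_if_twice_le_cube_add)
  qed
  have "3 * n^2 = k + (3 * j + 14)"
    unfolding k_def n by (simp add: power2_eq_square algebra_simps)
  moreover have "2 < n ^ (3 * j + 14)"
    using n power_increasing[of 1 "3 * j + 14" n] by simp
  ultimately have "2 * n ^ k < n ^ (3 * n^2)"
    using n by (simp add: power_add)
  with le_n_pow_k[of 1] le_n_pow_k[of 2] show ?thesis
    unfolding k_def by simp
qed

end
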